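(* Assume each $L_r:Lip_d(I)\to Lip_d(I)$ ($r\in\mathbb{N}$) is linear and that there is a linear operator $L$ on $Lip_d(I)$ with $\|Lf\|_\infty=\sup_{r\in\mathbb{N}}\|L_rf\|_\infty$ for all $f\in Lip_d(I)$. Then the non-stationary fractal operator $\mathfrak{F}^\alpha_b:Lip_d(I)\to C(I)$, $\mathfrak{F}^\alpha_b(f)=f^\alpha_b$, is relatively bounded with respect to $L$: for all $f\in Lip_d(I)$, $$\|\mathfrak{F}^\alpha_b(f)\|_\infty\le\frac{1}{1-\|\alpha\|_\infty}\|f\|_\infty+\frac{\|\alpha\|_\infty}{1-\|\alpha\|_\infty}\|Lf\|_\infty,$$ so the $L$-bound of $\mathfrak{F}^\alpha_b$ is at most $\frac{\|\alpha\|_\infty}{1-\|\alpha\|_\infty}$.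
   Context: Setting: $I=[x_0,x_N]$ with partition $\Delta: x_0<x_1<\dots<x_N$, $I_i=[x_{i-1},x_i]$, $l_i:I\to I_i$ the increasing affine bijection $l_i(x)=\frac{x_i-x_{i-1}}{x_N-x_0}x+\frac{x_Nx_{i-1}-x_0x_i}{x_N-x_0}$, and $Q_i=l_i^{-1}$. Scaling functions $\alpha_{i,r}:I\to\mathbb{R}$ ($i=1,\dots,N$, $r\in\mathbb{N}$) are continuous with $\|\alpha\|_\infty:=\sup_{r}\max_i\|\alpha_{i,r}\|_\infty<1$. $Lip_d(I)$ ($0<d\le1$) is the space of real functions $g$ on $I$ with $\sup_{x\ne y}|g(x)-g(y)|/|x-y|^d<\infty$, regarded as a subset of $C(I)$ with the supremum norm. $L_r$ satisfy $(L_rg)(x_0)=g(x_0)$, $(L_rg)(x_N)=g(x_N)$ and $\sup_r\|L_r\|_\infty<\infty$ (operator norms w.r.t. the sup norm). An operator $\mathcal{T}_1$ is relatively bounded w.r.t. $\mathcal{T}_2$ if $\|\mathcal{T}_1u\|\le t_1\|u\|+t_2\|\mathcal{T}_2u\|$ for some $t_1,t_2\ge0$ and all $u$; the infimum of such $t_2$ is the $\mathcal{T}_2$-bound. Non-stationary $\alpha$-fractal function: for $f\in C(I)$ and base functions $b_r\in C(I)$ with $b_r(x_0)=f(x_0)$, $b_r(x_N)=f(x_N)$, $\sup_r\|b_r\|_\infty<\infty$, let $C_f(I)=\{g\in C(I):g(x_0)=f(x_0),g(x_N)=f(x_N)\}$ and $T^{\alpha_r}:C_f(I)\to C_f(I)$,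 $(T^{\alpha_r}g)(x)=f(x)+\alpha_{i,r}(Q_i(x))(g-b_r)(Q_i(x))$ for $x\in I_i$. For every $g\in C_f(I)$, $T^{\alpha_1}\circ\cdots\circ T^{\alpha_r}g$ converges uniformly to a function independent of $g$; this is the non-stationary $\alpha$-fractal function. $f^\alpha_b$ denotes it for $f\in Lip_d(I)$ with $b_r=L_rf$. *)

theory Defs
  imports "HOL-Analysis.Analysis"
begin

text \<open>Functions on I are represented as total functions real => real;
 only their values on I = {x 0..x N} matter.\<close>

definition supn :: "real set \<Rightarrow> (real \<Rightarrow> real) \<Rightarrow> real" where
  "supn I g = (SUP t\<in>I. \<bar>g t\<bar>)"

definition lip_space :: "real \<Rightarrow> real set \<Rightarrow> (real \<Rightarrow> real) set" where
  "lip_space d I = {g. \<exists>C. \<forall>s\<in>I. \<forall>t\<in>I. \<bar>g s - g t\<bar> \<le> C * \<bar>s - t\<bar> powr d}"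

text \<open>Q_i = l_i^{-1}, where l_i is the increasing affine bijection of [x_0,x_N] onto [x_{i-1},x_i].\<close>
definition lmap :: "(nat \<Rightarrow> real) \<Rightarrow> nat \<Rightarrow> nat \<Rightarrow> real \<Rightarrow> real" where
  "lmap x N i t = (x i - x (i - 1)) / (x N - x 0) * t + (x N * x (i - 1) - x 0 * x i) / (x N - x 0)"

definition Qmap :: "(nat \<Rightarrow> real) \<Rightarrow> nat \<Rightarrow> nat \<Rightarrow> real \<Rightarrow> real" where
  "Qmap x N i t = ((x N - x 0) * t - (x N * x (i - 1) - x 0 * x i)) / (x i - x (i - 1))"

definition subint :: "(nat \<Rightarrow> real) \<Rightarrow> real \<Rightarrow> nat" where
  "subint x t = (LEAST i. 1 \<le> i \<and> t \<le> x i)"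

definition RB_op :: "(nat \<Rightarrow> real) \<Rightarrow> nat \<Rightarrow> (nat \<Rightarrow> real \<Rightarrow> real) \<Rightarrow> (real \<Rightarrow> real)
    \<Rightarrow> (real \<Rightarrow> real) \<Rightarrow> (real \<Rightarrow> real) \<Rightarrow> real \<Rightarrow> real" where
  "RB_op x N alpha_r f b_r g t =
     (let i = subint x t; q = Qmap x N i t in f t + alpha_r i q * (g q - b_r q))"

fun comp_upto :: "(nat \<Rightarrow> (real \<Rightarrow> real) \<Rightarrow> (real \<Rightarrow> real)) \<Rightarrow> nat \<Rightarrow> (real \<Rightarrow> real) \<Rightarrow> (real \<Rightarrow> real)" where
  "comp_upto T 0 = id"
| "comp_upto T (Suc r) = comp_upto T r \<circ> T (Suc r)"

text \<open>Non-stationary alpha-fractal function f^\<alpha>_b with b_r = L_r f (r \<ge> 1): the limit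
 of T^{\<alpha>_1} \<circ> ... \<circ> T^{\<alpha>_r} g, evaluated with the seed g = f \<in> C_f(I).\<close>
definition fractal_fun :: "(nat \<Rightarrow> real) \<Rightarrow> nat \<Rightarrow> (nat \<Rightarrow> nat \<Rightarrow> real \<Rightarrow> real)
    \<Rightarrow> (nat \<Rightarrow> (real \<Rightarrow> real) \<Rightarrow> (real \<Rightarrow> real)) \<Rightarrow> (real \<Rightarrow> real) \<Rightarrow> real \<Rightarrow> real" where
  "fractal_fun x N alpha Ls f t =
     lim (\<lambda>r. comp_upto (\<lambda>k. RB_op x N (alpha k) f (Ls k f)) r f t)"

definition alpha_norm :: "(nat \<Rightarrow> real) \<Rightarrow> nat \<Rightarrow> (nat \<Rightarrow> nat \<Rightarrow> real \<Rightarrow> real) \<Rightarrow> real" where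
  "alpha_norm x N alpha = (SUP (r, i)\<in>{1..} \<times> {1..N}. supn {x 0..x N} (alpha r i))"

end

theory Submission
  imports Defs
begin

text \<open>Let \<open>a = \<parallel>\<alpha>\<parallel>\<^sub>\<infinity>\<close>, \<open>M = \<parallel>L f\<parallel>\<^sub>\<infinity>\<close> and \<open>B = (\<parallel>f\<parallel>\<^sub>\<infinity> + a M) / (1 - a)\<close>.
  Since \<open>\<parallel>L\<^sub>r f\<parallel>\<^sub>\<infinity> \<le> M\<close> for every \<open>r\<close> and \<open>\<parallel>f\<parallel>\<^sub>\<infinity> + a (B + M) = B\<close>, every
  Read-Bajraktarevic operator \<open>T\<^sub>r\<close> (built from \<open>\<alpha>\<^sub>r\<close> and \<open>L\<^sub>r f\<close>) maps the ball of radius \<open>B\<close> into itself, and it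
  is an \<open>a\<close>-contraction. Hence the iterates \<open>T\<^sub>1 \<circ> \<dots> \<circ> T\<^sub>r f\<close> stay in that ball,
  consecutive iterates differ by at most \<open>2 B a\<^sup>r\<close>, and their limit \<open>f\<^sup>\<alpha>\<^sub>b\<close> is
  bounded by \<open>B\<close>.\<close>

lemma convergent_if_increments_le_geometric:
  fixes X :: "nat \<Rightarrow> real"
  assumes "\<And>n. \<bar>X (Suc n) - X n\<bar> \<le> C * a ^ n" "0 \<le> a" "a < 1"
  shows "convergent X"
proof -
  have "summable (\<lambda>n. C * a ^ n)" using assms by (intro summable_mult summable_geometric) auto
  hence "summable (\<lambda>n. X (Suc n) - X n)"
    by (rule summable_comparison_test[rotated]) (use assms in auto)
  hence "convergent (\<lambda>n. \<Sum>i<n. X (Suc i) - X i)" by (simp add: summable_iff_convergent)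
  hence "convergent (\<lambda>n. X n - X 0)" by (simp add: sum_lessThan_telescope)
  hence "convergent (\<lambda>n. X n - X 0 + X 0)" by (rule convergent_add) (simp add: convergent_const)
  thus ?thesis by simp
qed

lemma comp_upto_preserves:
  assumes "\<And>k g. 1 \<le> k \<Longrightarrow> g \<in> S \<Longrightarrow> T k g \<in> S" and "g \<in> S"
  shows "comp_upto T r g \<in> S"
  using assms(2) by (induction r arbitrary: g) (simp_all add: assms(1))

lemma comp_upto_contraction:
  assumes contr: "\<And>k g h D. 1 \<le> k \<Longrightarrow> \<forall>s\<in>I. \<bar>g s - h s\<bar> \<le> D \<Longrightarrow>
      \<forall>s\<in>I. \<bar>T k g s - T k h s\<bar> \<le> a * D"
    and "\<forall>s\<in>I. \<bar>g s - h s\<bar> \<le> D"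
  shows "\<forall>s\<in>I. \<bar>comp_upto T r g s - comp_upto T r h s\<bar> \<le> a ^ r * D"
  using assms(2)
proof (induction r arbitrary: g h D)
  case (Suc r)
  have "\<forall>s\<in>I. \<bar>T (Suc r) g s - T (Suc r) h s\<bar> \<le> a * D" using contr Suc.prems by simp
  then have "\<forall>s\<in>I. \<bar>comp_upto T r (T (Suc r) g) s - comp_upto T r (T (Suc r) h) s\<bar> \<le> a ^ r * (a * D)"
    by (rule Suc.IH)
  then show ?case by (simp add: mult.assoc mult.left_commute)
qed simp

lemma abs_lim_comp_upto_le:
  assumes maps: "\<And>k g. 1 \<le> k \<Longrightarrow> \<forall>s\<in>I. \<bar>g s\<bar> \<le> B \<Longrightarrow> \<forall>s\<in>I. \<bar>T k g s\<bar> \<le> B"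
    and contr: "\<And>k g h D. 1 \<le> k \<Longrightarrow> \<forall>s\<in>I. \<bar>g s - h s\<bar> \<le> D \<Longrightarrow>
      \<forall>s\<in>I. \<bar>T k g s - T k h s\<bar> \<le> a * D"
    and a: "0 \<le> a" "a < 1"
    and g: "\<forall>s\<in>I. \<bar>g s\<bar> \<le> B" and t: "t \<in> I"
  shows "\<bar>lim (\<lambda>r. comp_upto T r g t)\<bar> \<le> B"
proof -
  have bounded: "\<bar>comp_upto T r g t\<bar> \<le> B" for r
    using comp_upto_preserves[where T=T and S="{h. \<forall>s\<in>I. \<bar>h s\<bar> \<le> B}"] maps g t by blast
  have "\<bar>comp_upto T (Suc r) g t - comp_upto T r g t\<bar> \<le> 2 * B * a ^ r" for r
  proof -
    have "\<forall>s\<in>I. \<bar>T (Suc r) g s - g s\<bar> \<le> 2 * B"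
      using maps[of "Suc r" g] g by fastforce
    then have "\<bar>comp_upto T r (T (Suc r) g) t - comp_upto T r g t\<bar> \<le> a ^ r * (2 * B)"
      using comp_upto_contraction[of I T a] contr t by blast
    then show ?thesis by (simp add: mult.commute)
  qed
  then have "convergent (\<lambda>r. comp_upto T r g t)"
    using a by (rule convergent_if_increments_le_geometric)
  then have "(\<lambda>r. \<bar>comp_upto T r g t\<bar>) \<longlonglongrightarrow> \<bar>lim (\<lambda>r. comp_upto T r g t)\<bar>"
    by (intro tendsto_rabs) (simp add: convergent_LIMSEQ_iff)
  then show ?thesis using bounded by (intro Lim_bounded[where M=0]) auto
qed

lemma partition_mono:
  fixes x :: "nat \<Rightarrow> real"
  assumes part: "\<And>i. i < N \<Longrightarrow> x i < x (Suc i)" and "i \<le> j" "j \<le> N"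
  shows "x i \<le> x j"
  using assms(2,3)
proof (induction j)
  case (Suc j)
  show ?case
  proof (cases "i = Suc j")
    case False
    then have "x i \<le> x j" using Suc by auto
    also have "x j < x (Suc j)" using part Suc by auto
    finally show ?thesis by simp
  qed simp
qed simp

lemma subint_bounds:
  fixes x :: "nat \<Rightarrow> real"
  assumes N: "1 \<le> N" and t: "t \<in> {x 0..x N}"
  shows "1 \<le> subint x t" "subint x t \<le> N" "x (subint x t - 1) \<le> t" "t \<le> x (subint x t)"
proof -
  let ?P = "\<lambda>i. 1 \<le> i \<and> t \<le> x i"
  have PN: "?P N" using N t by auto
  show P: "1 \<le> subint x t" "t \<le> x (subint x t)"
    unfolding subint_def using LeastI[of ?P N, OF PN] by auto
  show "subint x t \<le> N" unfolding subint_def by (rule Least_le[of ?P N, OF PN])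
  show "x (subint x t - 1) \<le> t"
  proof (cases "subint x t = 1")
    case False
    then have "subint x t - 1 < subint x t" "1 \<le> subint x t - 1" using P by auto
    then show ?thesis using not_less_Least[of "subint x t - 1" ?P] unfolding subint_def by fastforce
  qed (use t in simp)
qed

lemma Qmap_in_interval:
  fixes x :: "nat \<Rightarrow> real"
  assumes part: "\<And>i. i < N \<Longrightarrow> x i < x (Suc i)"
    and i: "1 \<le> i" "i \<le> N" and t: "x (i - 1) \<le> t" "t \<le> x i"
  shows "Qmap x N i t \<in> {x 0..x N}"
proof -
  define a b where "a = x (i - 1)" and "b = x i"
  have ab: "a < b" "a \<le> t" "t \<le> b" using part[of "i - 1"] i t unfolding a_def b_def by auto
  have x0N: "x 0 \<le> x N" using partition_mono[where x=x and N=N, OF part] by simp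
  have Q: "Qmap x N i t = ((x N - x 0) * t - (x N * a - x 0 * b)) / (b - a)"
    unfolding Qmap_def a_def b_def by simp
  have "0 \<le> (x N - x 0) * (t - a)" "0 \<le> (x N - x 0) * (b - t)" using x0N ab by auto
  then show ?thesis unfolding Q using ab by (simp add: field_simps)
qed

lemma RB_op_at:
  fixes x :: "nat \<Rightarrow> real"
  assumes N: "1 \<le> N" and part: "\<And>i. i < N \<Longrightarrow> x i < x (Suc i)" and t: "t \<in> {x 0..x N}"
  obtains i q where "1 \<le> i" "i \<le> N" "q \<in> {x 0..x N}"
    "\<And>alpha_r f b g. RB_op x N alpha_r f b g t = f t + alpha_r i q * (g q - b q)"
proof
  show "1 \<le> subint x t" "subint x t \<le> N" using subint_bounds[OF N t] by auto
  show "Qmap x N (subint x t) t \<in> {x 0..x N}"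
    using Qmap_in_interval[where x=x and N=N, OF part] subint_bounds[OF N t] by auto
qed (simp add: RB_op_def Let_def)

lemma abs_RB_op_diff_le:
  fixes x :: "nat \<Rightarrow> real"
  assumes N: "1 \<le> N" and part: "\<And>i. i < N \<Longrightarrow> x i < x (Suc i)"
    and alpha_le: "\<And>i q. 1 \<le> i \<Longrightarrow> i \<le> N \<Longrightarrow> q \<in> {x 0..x N} \<Longrightarrow> \<bar>alpha_r i q\<bar> \<le> a"
    and gh: "\<forall>s\<in>{x 0..x N}. \<bar>g s - h s\<bar> \<le> D" and t: "t \<in> {x 0..x N}"
  shows "\<bar>RB_op x N alpha_r f b g t - RB_op x N alpha_r f b h t\<bar> \<le> a * D"
    and "\<bar>RB_op x N alpha_r f h g t - f t\<bar> \<le> a * D"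
proof -
  obtain i q where i: "1 \<le> i" "i \<le> N" and q: "q \<in> {x 0..x N}"
    and RB: "\<And>alpha_r f b g. RB_op x N alpha_r f b g t = f t + alpha_r i q * (g q - b q)"
    using RB_op_at[OF N part t] by blast
  have "\<bar>alpha_r i q * (g q - h q)\<bar> \<le> a * D"
    unfolding abs_mult using alpha_le[OF i q] gh q by (intro mult_mono) auto
  then show "\<bar>RB_op x N alpha_r f b g t - RB_op x N alpha_r f b h t\<bar> \<le> a * D"
    and "\<bar>RB_op x N alpha_r f h g t - f t\<bar> \<le> a * D"
    unfolding RB by (simp_all add: algebra_simps)
qed

lemma abs_fractal_fun_le:
  fixes x :: "nat \<Rightarrow> real"
  assumes N: "1 \<le> N" and part: "\<And>i. i < N \<Longrightarrow> x i < x (Suc i)" and a: "a < 1"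
    and alpha_le: "\<And>r i q. 1 \<le> r \<Longrightarrow> 1 \<le> i \<Longrightarrow> i \<le> N \<Longrightarrow> q \<in> {x 0..x N} \<Longrightarrow> \<bar>alpha r i q\<bar> \<le> a"
    and f_le: "\<And>s. s \<in> {x 0..x N} \<Longrightarrow> \<bar>f s\<bar> \<le> F"
    and b_le: "\<And>r s. 1 \<le> r \<Longrightarrow> s \<in> {x 0..x N} \<Longrightarrow> \<bar>Ls r f s\<bar> \<le> M"
    and t: "t \<in> {x 0..x N}"
  shows "\<bar>fractal_fun x N alpha Ls f t\<bar> \<le> (F + a * M) / (1 - a)"
proof -
  let ?I = "{x 0..x N}"
  define B where "B = (F + a * M) / (1 - a)"
  have a0: "0 \<le> a" using alpha_le[of 1 1 t] N t by auto
  have "0 \<le> F" "0 \<le> M" using f_le[OF t] b_le[of 1 t] t by auto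
  then have "F \<le> B" and B_fixed: "F + a * (B + M) = B"
    unfolding B_def using a a0 by (simp_all add: field_simps)
  have maps: "\<forall>s\<in>?I. \<bar>RB_op x N (alpha k) f (Ls k f) g s\<bar> \<le> B"
    if k: "1 \<le> k" and g: "\<forall>s\<in>?I. \<bar>g s\<bar> \<le> B" for k g
  proof
    fix s assume s: "s \<in> ?I"
    have gk: "\<forall>s\<in>?I. \<bar>g s - Ls k f s\<bar> \<le> B + M"
      using g b_le[OF k] by (metis abs_triangle_ineq4 add_mono order_trans)
    have "\<bar>RB_op x N (alpha k) f (Ls k f) g s - f s\<bar> \<le> a * (B + M)"
      using abs_RB_op_diff_le(2)[OF N part alpha_le[OF k] gk s] .
    then show "\<bar>RB_op x N (alpha k) f (Ls k f) g s\<bar> \<le> B"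
      using f_le[OF s] B_fixed by linarith
  qed
  have contr: "\<forall>s\<in>?I.
      \<bar>RB_op x N (alpha k) f (Ls k f) g s - RB_op x N (alpha k) f (Ls k f) h s\<bar> \<le> a * D"
    if k: "1 \<le> k" and gh: "\<forall>s\<in>?I. \<bar>g s - h s\<bar> \<le> D" for k g h D
  proof
    fix s assume s: "s \<in> ?I"
    show "\<bar>RB_op x N (alpha k) f (Ls k f) g s - RB_op x N (alpha k) f (Ls k f) h s\<bar> \<le> a * D"
      using abs_RB_op_diff_le(1)[OF N part alpha_le[OF k] gh s] .
  qed
  have "\<forall>s\<in>?I. \<bar>f s\<bar> \<le> B" using f_le \<open>F \<le> B\<close> by force
  then have "\<bar>lim (\<lambda>r. comp_upto (\<lambda>k. RB_op x N (alpha k) f (Ls k f)) r f t)\<bar> \<le> B"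
    using abs_lim_comp_upto_le[where T="\<lambda>k. RB_op x N (alpha k) f (Ls k f)",
        OF maps contr a0 a _ t] by blast
  then show ?thesis unfolding fractal_fun_def B_def .
qed

lemma bdd_above_abs_if_lip_space:
  assumes g: "g \<in> lip_space d {a..b}" and d: "0 \<le> d"
  shows "bdd_above ((\<lambda>t. \<bar>g t\<bar>) ` {a..b})"
proof -
  obtain C where C: "\<forall>s\<in>{a..b}. \<forall>t\<in>{a..b}. \<bar>g s - g t\<bar> \<le> C * \<bar>s - t\<bar> powr d"
    using g unfolding lip_space_def by auto
  have "\<bar>g t\<bar> \<le> \<bar>g a\<bar> + \<bar>C\<bar> * (b - a) powr d" if t: "t \<in> {a..b}" for t
  proof -
    have "\<bar>g t - g a\<bar> \<le> C * \<bar>t - a\<bar> powr d" using C t by fastforce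
    also have "\<dots> \<le> \<bar>C\<bar> * \<bar>t - a\<bar> powr d" by (simp add: mult_right_mono)
    also have "\<dots> \<le> \<bar>C\<bar> * (b - a) powr d"
      using t d by (intro mult_left_mono powr_mono2) auto
    finally show ?thesis by linarith
  qed
  then show ?thesis by (intro bdd_aboveI2) auto
qed

lemma bdd_above_abs_if_continuous_on:
  fixes g :: "real \<Rightarrow> real"
  assumes "continuous_on {a..b} g"
  shows "bdd_above ((\<lambda>t. \<bar>g t\<bar>) ` {a..b})"
proof -
  have "bounded (g ` {a..b})" using assms by (intro compact_imp_bounded compact_continuous_image) auto
  then show ?thesis by (auto simp: bounded_iff bdd_above_def)
qed

lemma abs_le_supn:
  assumes "bdd_above ((\<lambda>t. \<bar>g t\<bar>) ` I)" "t \<in> I"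
  shows "\<bar>g t\<bar> \<le> supn I g"
  unfolding supn_def using assms by (rule cSUP_upper2[where x=t]) auto

lemma supn_le:
  assumes "I \<noteq> {}" "\<And>t. t \<in> I \<Longrightarrow> \<bar>g t\<bar> \<le> B"
  shows "supn I g \<le> B"
  unfolding supn_def using assms by (intro cSUP_least) auto

lemma abs_le_alpha_norm:
  fixes x :: "nat \<Rightarrow> real"
  assumes "continuous_on {x 0..x N} (alpha r i)"
    and "bdd_above ((\<lambda>(r, i). supn {x 0..x N} (alpha r i)) ` ({1..} \<times> {1..N}))"
    and "1 \<le> r" "1 \<le> i" "i \<le> N" "q \<in> {x 0..x N}"
  shows "\<bar>alpha r i q\<bar> \<le> alpha_norm x N alpha"
proof -
  have "\<bar>alpha r i q\<bar> \<le> supn {x 0..x N} (alpha r i)"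
    using bdd_above_abs_if_continuous_on[OF assms(1)] assms(6) by (rule abs_le_supn)
  also have "\<dots> \<le> alpha_norm x N alpha"
    unfolding alpha_norm_def using assms(2-5) by (intro cSUP_upper2[where x="(r, i)"]) auto
  finally show ?thesis .
qed

lemma abs_le_SUP_supn_if_lip_space:
  assumes "\<And>r. r \<in> K \<Longrightarrow> g r \<in> lip_space d {a..b}" "0 \<le> d"
    and "bdd_above ((\<lambda>r. supn {a..b} (g r)) ` K)" "k \<in> K" "t \<in> {a..b}"
  shows "\<bar>g k t\<bar> \<le> (SUP r\<in>K. supn {a..b} (g r))"
proof -
  have "\<bar>g k t\<bar> \<le> supn {a..b} (g k)"
    using bdd_above_abs_if_lip_space[OF assms(1)[OF assms(4)] assms(2)] assms(5) by (rule abs_le_supn)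
  also have "\<dots> \<le> (SUP r\<in>K. supn {a..b} (g r))" using assms(4,3) by (rule cSUP_upper)
  finally show ?thesis .
qed

theorem mainTheorem7:
  fixes x :: "nat \<Rightarrow> real" and N :: nat and d :: real
    and alpha :: "nat \<Rightarrow> nat \<Rightarrow> real \<Rightarrow> real"
    and Ls :: "nat \<Rightarrow> (real \<Rightarrow> real) \<Rightarrow> (real \<Rightarrow> real)"
    and L :: "(real \<Rightarrow> real) \<Rightarrow> (real \<Rightarrow> real)"
    and f :: "real \<Rightarrow> real"
  defines "I \<equiv> {x 0..x N}"
  assumes N: "1 \<le> N"
    and part: "\<And>i. i < N \<Longrightarrow> x i < x (Suc i)"
    and d: "0 < d" "d \<le> 1"
    and alpha_cont: "\<And>r i. 1 \<le> r \<Longrightarrow> 1 \<le> i \<Longrightarrow> i \<le> N \<Longrightarrow> continuous_on I (alpha r i)"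
    and alpha_bdd: "bdd_above ((\<lambda>(r, i). supn I (alpha r i)) ` ({1..} \<times> {1..N}))"
    and alpha_lt1: "alpha_norm x N alpha < 1"
    and Ls_maps: "\<And>r g. 1 \<le> r \<Longrightarrow> g \<in> lip_space d I \<Longrightarrow> Ls r g \<in> lip_space d I"
    and Ls_welldef: "\<And>r g h. 1 \<le> r \<Longrightarrow> g \<in> lip_space d I \<Longrightarrow> h \<in> lip_space d I \<Longrightarrow>
        (\<forall>t\<in>I. g t = h t) \<Longrightarrow> (\<forall>t\<in>I. Ls r g t = Ls r h t)"
    and Ls_linear: "\<And>r g h a c t. 1 \<le> r \<Longrightarrow> g \<in> lip_space d I \<Longrightarrow> h \<in> lip_space d I \<Longrightarrow> t \<in> I \<Longrightarrow>
        Ls r (\<lambda>s. a * g s + c * h s) t = a * Ls r g t + c * Ls r h t"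
    and Ls_ends: "\<And>r g. 1 \<le> r \<Longrightarrow> g \<in> lip_space d I \<Longrightarrow>
        Ls r g (x 0) = g (x 0) \<and> Ls r g (x N) = g (x N)"
    and Ls_bdd: "\<exists>M. \<forall>r\<ge>1. \<forall>g\<in>lip_space d I. supn I (Ls r g) \<le> M * supn I g"
    and L_maps: "\<And>g. g \<in> lip_space d I \<Longrightarrow> L g \<in> lip_space d I"
    and L_welldef: "\<And>g h. g \<in> lip_space d I \<Longrightarrow> h \<in> lip_space d I \<Longrightarrow>
        (\<forall>t\<in>I. g t = h t) \<Longrightarrow> (\<forall>t\<in>I. L g t = L h t)"
    and L_linear: "\<And>g h a c t. g \<in> lip_space d I \<Longrightarrow> h \<in> lip_space d I \<Longrightarrow> t \<in> I \<Longrightarrow>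
        L (\<lambda>s. a * g s + c * h s) t = a * L g t + c * L h t"
    and L_sup: "\<And>g. g \<in> lip_space d I \<Longrightarrow> supn I (L g) = (SUP r\<in>{1..}. supn I (Ls r g))"
    and f: "f \<in> lip_space d I"
  shows "supn I (fractal_fun x N alpha Ls f)
     \<le> 1 / (1 - alpha_norm x N alpha) * supn I f
       + alpha_norm x N alpha / (1 - alpha_norm x N alpha) * supn I (L f)"
proof -
  let ?a = "alpha_norm x N alpha"
  have "I \<noteq> {}" using partition_mono[where x=x and N=N, OF part, of 0 N] unfolding I_def by simp
  have f_le: "\<bar>f s\<bar> \<le> supn I f" if "s \<in> I" for s
    using bdd_above_abs_if_lip_space[OF f[unfolded I_def]] d that unfolding I_def
    by (intro abs_le_supn) auto
  obtain C where "\<forall>r\<ge>1. \<forall>g\<in>lip_space d I. supn I (Ls r g) \<le> C * supn I g" using Ls_bdd by blast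
  then have Ls_f_bdd: "bdd_above ((\<lambda>r. supn I (Ls r f)) ` {1..})"
    using f by (intro bdd_aboveI2) auto
  have Ls_le: "\<bar>Ls r f s\<bar> \<le> supn I (L f)" if "1 \<le> r" "s \<in> I" for r s
    unfolding L_sup[OF f] using Ls_maps f d Ls_f_bdd that unfolding I_def
    by (intro abs_le_SUP_supn_if_lip_space[where g="\<lambda>r. Ls r f"]) auto
  have alpha_le: "\<bar>alpha r i q\<bar> \<le> ?a" if "1 \<le> r" "1 \<le> i" "i \<le> N" "q \<in> I" for r i q
    using abs_le_alpha_norm alpha_cont alpha_bdd that unfolding I_def by blast
  have "\<bar>fractal_fun x N alpha Ls f t\<bar> \<le> (supn I f + ?a * supn I (L f)) / (1 - ?a)" if "t \<in> I" for t
    by (rule abs_fractal_fun_le[where x=x, OF N part alpha_lt1])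
      (use alpha_le f_le Ls_le that in \<open>auto simp: I_def\<close>)
  then have "supn I (fractal_fun x N alpha Ls f) \<le> (supn I f + ?a * supn I (L f)) / (1 - ?a)"
    using \<open>I \<noteq> {}\<close> by (rule supn_le[rotated])
  then show ?thesis by (simp add: add_divide_distrib)
qed

end
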